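(* For every list (any length, any initial order) and every request sequence $\sigma$, in the full cost model, $$\min\{\mathrm{TS}(\sigma),\mathrm{MTFO}(\sigma),\mathrm{MTFE}(\sigma)\}\le \tfrac{5}{3}\,\mathrm{OPT}(\sigma).$$ Consequently, a deterministic online algorithm that receives two advice bits indicating which of TS, MTFO, MTFE has the smallest cost on $\sigma$ and then runs it has cost at most $\frac53\mathrm{OPT}(\sigma)$ on every $\sigma$.
   Context: Static list update problem: a list of $l$ distinct items in some initial order; a request sequence $\sigma$ is served in order. Serving a request to the item at position $i$ (positions $1,\dots,l$ from the front) costs $i$ (full cost model). Immediately after an access, the accessed item may be moved closer to the front at no cost (free exchange); at any time two adjacent items may be swapped at cost $1$ (paid exchange). $A(\sigma)$ is the total cost of algorithm $A$ on $\sigma$; $\mathrm{OPT}(\sigma)$ is the minimum cost of any offline algorithm on $\sigma$; all algorithms start from the same initial list. MTFO (Move-To-Front-Odd) moves a requested item to the front (by a free exchange) on the 1st, 3rd, 5th, ... request to that item, and otherwise leaves it in place. MTFE (Move-To-Front-Even) moves a requested item to the front on the 2nd, 4th, 6th, ... request to that item, and otherwise leaves it in place. TS (Timestamp): on a request to item $x$, if $x$ has been requested before and some item preceding $x$ in the list has been requested at most once since the previous request to $x$, then $x$ is moved (free exchange) to immediately in front of the frontmost such item; otherwise no item is moved. None of these algorithms makes paid exchanges. *)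

theory Defs
  imports Complex_Main
begin

text \<open>Static list update, full cost model. Lists are 0-indexed internally;
  the item at 0-based index i has position i+1 and access cost i+1.\<close>

definition idx :: "'a list \<Rightarrow> 'a \<Rightarrow> nat" where
  "idx xs x = length (takeWhile (\<lambda>y. y \<noteq> x) xs)"

text \<open>Free exchange: move x (forward) so that it ends at 0-based index k;
  if k is not in front of x's current index nothing happens.\<close>
definition mv_to :: "nat \<Rightarrow> 'a \<Rightarrow> 'a list \<Rightarrow> 'a list" where
  "mv_to k x s = (if k \<le> idx s x
     then (let r = remove1 x s in take k r @ x # drop k r) else s)"

definition swap_adj :: "nat \<Rightarrow> 'a list \<Rightarrow> 'a list" where
  "swap_adj i xs = (if Suc i < length xs then xs[i := xs ! Suc i, Suc i := xs ! i] else xs)"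

text \<open>Online algorithm without paid exchanges, given by a rule that, from the
  history of past requests, the current list and the requested item, chooses the
  target index of the free exchange.\<close>
fun run_online :: "('a list \<Rightarrow> 'a list \<Rightarrow> 'a \<Rightarrow> nat) \<Rightarrow> 'a list \<Rightarrow> 'a list \<Rightarrow> 'a list \<Rightarrow> nat" where
  "run_online rule h s [] = 0"
| "run_online rule h s (x # \<sigma>) =
     Suc (idx s x) + run_online rule (h @ [x]) (mv_to (rule h s x) x s) \<sigma>"

definition mtfo_rule :: "'a list \<Rightarrow> 'a list \<Rightarrow> 'a \<Rightarrow> nat" where
  "mtfo_rule h s x = (if even (count_list h x) then 0 else idx s x)"

definition mtfe_rule :: "'a list \<Rightarrow> 'a list \<Rightarrow> 'a \<Rightarrow> nat" where
  "mtfe_rule h s x = (if odd (count_list h x) then 0 else idx s x)"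

text \<open>TS: if x was requested before, let seg be the requests since the previous
  request to x; move x immediately in front of the frontmost item preceding x
  that occurs at most once in seg (if any).\<close>
definition ts_rule :: "'a list \<Rightarrow> 'a list \<Rightarrow> 'a \<Rightarrow> nat" where
  "ts_rule h s x = (if x \<in> set h then
     (let j = length h - 1 - idx (rev h) x;
          seg = drop (Suc j) h;
          cands = filter (\<lambda>i. count_list seg (s ! i) \<le> 1) [0..<idx s x]
      in if cands = [] then idx s x else hd cands)
   else idx s x)"

definition TS :: "'a list \<Rightarrow> 'a list \<Rightarrow> nat" where
  "TS init \<sigma> = run_online ts_rule [] init \<sigma>"
definition MTFO :: "'a list \<Rightarrow> 'a list \<Rightarrow> nat" where
  "MTFO init \<sigma> = run_online mtfo_rule [] init \<sigma>"
definition MTFE :: "'a list \<Rightarrow> 'a list \<Rightarrow> nat" where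
  "MTFE init \<sigma> = run_online mtfe_rule [] init \<sigma>"

text \<open>General offline algorithm: before each access an arbitrary sequence of
  paid adjacent exchanges (cost 1 each), then the access (cost = position),
  then a free exchange moving the accessed item forward to index k.\<close>
fun run_offline :: "'a list \<Rightarrow> 'a list \<Rightarrow> (nat list \<times> nat) list \<Rightarrow> nat" where
  "run_offline s (x # \<sigma>) ((sw, k) # as) =
     (let s1 = foldl (\<lambda>t i. swap_adj i t) s sw
      in length sw + Suc (idx s1 x) + run_offline (mv_to k x s1) \<sigma> as)"
| "run_offline s _ _ = 0"

definition OPT :: "'a list \<Rightarrow> 'a list \<Rightarrow> nat" where
  "OPT init \<sigma> = Inf {run_offline init \<sigma> as | as. length as = length \<sigma>}"

end

theory Submission
  imports Defs
begin

text \<open>List factoring: the cost of accessing an item is the number of items in front of it,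
  a sum of costs on unordered pairs, so it suffices to compare the algorithms pair by pair.
  TS, MTFO and MTFE are pairwise independent: the relative order in which they keep two
  items x and y depends only on the requests to x and y (for TS on the last three of these
  and the initial order, for MTFO and MTFE on parities of request counts).  Hence the
  three relative orders are driven by a finite automaton reading the projection of the
  request sequence to x and y.  A potential on automaton states and the order of OPT,
  verified by evaluation on the 39 reachable states, shows that per pair
  TS + MTFO + MTFE pays at most 5 times the cost of OPT, paid exchanges of OPT included.
  Summing over pairs gives TS + MTFO + MTFE \<le> 5 OPT.\<close>

section \<open>Positions in lists\<close>

lemma idx_Cons: "idx (a # xs) z = (if a = z then 0 else Suc (idx xs z))"
  by (simp add: idx_def)

lemma idx_less_length: "z \<in> set s \<Longrightarrow> idx s z < length s"
  by (induction s) (auto simp: idx_Cons)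

lemma nth_idx: "z \<in> set s \<Longrightarrow> s ! idx s z = z"
  by (induction s) (auto simp: idx_Cons)

lemma idx_nth: "distinct s \<Longrightarrow> i < length s \<Longrightarrow> idx s (s ! i) = i"
  by (induction s arbitrary: i) (auto simp: idx_Cons nth_Cons split: nat.splits)

lemma idx_append: "idx (xs @ ys) z = (if z \<in> set xs then idx xs z else length xs + idx ys z)"
  by (induction xs) (auto simp: idx_Cons)

lemma idx_inj: "x \<in> set s \<Longrightarrow> y \<in> set s \<Longrightarrow> idx s x = idx s y \<Longrightarrow> x = y"
  by (metis nth_idx)

lemma in_set_take_iff_idx_less: "z \<in> set s \<Longrightarrow> z \<in> set (take k s) \<longleftrightarrow> idx s z < k"
proof (induction s arbitrary: k)
  case (Cons a s)
  then show ?case by (cases k) (auto simp: idx_Cons)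
qed simp

lemma idx_take: "z \<in> set (take k s) \<Longrightarrow> idx (take k s) z = idx s z"
  by (induction s arbitrary: k) (auto simp: idx_Cons take_Cons split: nat.splits if_splits)

lemma idx_drop: "z \<in> set s \<Longrightarrow> k \<le> idx s z \<Longrightarrow> idx (drop k s) z = idx s z - k"
  by (induction s arbitrary: k) (auto simp: idx_Cons drop_Cons split: nat.splits if_splits)

lemma idx_remove1:
  assumes "z \<in> set s" "a \<in> set s" "z \<noteq> a"
  shows "idx (remove1 a s) z = (if idx s z < idx s a then idx s z else idx s z - 1)"
  using assms
proof (induction s)
  case (Cons c s)
  show ?case
  proof (cases "c = a")
    case False
    then have "a \<in> set s" using Cons by auto
    moreover have "c \<noteq> z \<Longrightarrow> z \<in> set s" using Cons by auto
    moreover have "c \<noteq> z \<Longrightarrow> idx s z \<noteq> idx s a" using Cons calculation idx_inj by metis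
    ultimately show ?thesis using Cons False by (auto simp: idx_Cons)
  qed (use Cons in \<open>auto simp: idx_Cons\<close>)
qed simp

lemma card_idx_less:
  assumes "distinct s" "a \<in> set s"
  shows "card {y \<in> set s. idx s y < idx s a} = idx s a"
proof -
  have "{y \<in> set s. idx s y < idx s a} = set (take (idx s a) s)"
    using in_set_take_iff_idx_less[of _ s] by (auto dest: in_set_takeD)
  moreover have "length (take (idx s a) s) = idx s a" using idx_less_length[OF assms(2)] by simp
  ultimately show ?thesis using assms(1) by (simp add: distinct_card)
qed

lemma mv_to_eq:
  assumes "k \<le> idx s a" "a \<in> set s"
  shows "mv_to k a s = take k s @ a # remove1 a (drop k s)"
proof -
  have "a \<notin> set (take k s)" using assms in_set_take_iff_idx_less[of a s k] by simp
  then have "remove1 a s = take k s @ remove1 a (drop k s)"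
    using remove1_append[of a "take k s" "drop k s"] by simp
  moreover have "k < length s" using assms idx_less_length[of a s] by simp
  ultimately show ?thesis using assms by (simp add: mv_to_def Let_def)
qed

lemma mv_to_perm:
  assumes "distinct s" "a \<in> set s"
  shows "distinct (mv_to k a s) \<and> set (mv_to k a s) = set s"
proof (cases "k \<le> idx s a")
  case True
  have "a \<notin> set (take k s)" using True assms in_set_take_iff_idx_less[of a s k] by simp
  moreover have "set (take k s) \<inter> set (drop k s) = {}"
    using assms(1) by (simp add: set_take_disj_set_drop_if_distinct)
  moreover have "set s = set (take k s) \<union> set (drop k s)"
    by (metis append_take_drop_id set_append)
  ultimately show ?thesis using True assms by (auto simp: mv_to_eq)
qed (simp add: mv_to_def assms)

lemma idx_mv_to:
  assumes "distinct s" "a \<in> set s" "k \<le> idx s a" "z \<in> set s"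
  shows "idx (mv_to k a s) z = (if z = a then k else if idx s z < k then idx s z
     else if idx s z < idx s a then Suc (idx s z) else idx s z)"
proof -
  have lt: "k < length s" using assms idx_less_length[of a s] by simp
  have na: "a \<notin> set (take k s)" using assms in_set_take_iff_idx_less[of a s k] by simp
  show ?thesis
  proof (cases "z \<in> set (take k s)")
    case True
    then have "idx s z < k" "z \<noteq> a" using in_set_take_iff_idx_less[of z s k] assms na by auto
    then show ?thesis using True by (simp add: assms mv_to_eq idx_append idx_take)
  next
    case False
    then have zk: "k \<le> idx s z" using in_set_take_iff_idx_less[of z s k] assms by auto
    have zd: "z \<in> set (drop k s)" and ad: "a \<in> set (drop k s)" using False na assms(2,4)
      by (metis Un_iff append_take_drop_id set_append)+
    show ?thesis
    proof (cases "z = a")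
      case True then show ?thesis using False lt by (simp add: assms mv_to_eq idx_append idx_Cons)
    next
      case za: False
      have "idx s z \<noteq> idx s a" using za idx_inj assms by metis
      moreover have "idx (remove1 a (drop k s)) z =
          (if idx s z < idx s a then idx s z - k else idx s z - k - 1)"
        using idx_remove1[OF zd ad za] idx_drop[OF assms(4) zk] idx_drop[OF assms(2,3)] by auto
      ultimately show ?thesis using False za zk lt assms(3)
        by (simp add: mv_to_eq[OF assms(3,2)] idx_append idx_Cons)
    qed
  qed
qed

lemma mv_to_less_iff:
  assumes "distinct s" "a \<in> set s" "k \<le> idx s a" "x \<in> set s" "y \<in> set s" "x \<noteq> y"
  shows "idx (mv_to k a s) x < idx (mv_to k a s) y \<longleftrightarrow>
    (if a = x then idx s x < idx s y \<or> k \<le> idx s y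
     else if a = y then idx s x < idx s y \<and> \<not> k \<le> idx s x else idx s x < idx s y)"
proof -
  have "idx s x \<noteq> idx s y" "x \<noteq> a \<Longrightarrow> idx s x \<noteq> idx s a" "y \<noteq> a \<Longrightarrow> idx s y \<noteq> idx s a"
    using assms idx_inj by metis+
  then show ?thesis using assms(3)
    by (simp add: idx_mv_to[OF assms(1-3)] assms(4,5)) (auto simp: assms(6)[symmetric])
qed

lemma mv_to_less_cases:
  assumes "distinct s" "a \<in> set s" "x \<in> set s" "y \<in> set s" "x \<noteq> y"
  shows "(a \<noteq> x \<and> a \<noteq> y \<longrightarrow> (idx (mv_to k a s) x < idx (mv_to k a s) y \<longleftrightarrow> idx s x < idx s y)) \<and>
         ((idx (mv_to k a s) x < idx (mv_to k a s) y) = (idx s x < idx s y) \<or>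
          (idx (mv_to k a s) x < idx (mv_to k a s) y) = (a = x))"
proof (cases "k \<le> idx s a")
  case True then show ?thesis using mv_to_less_iff[OF assms(1,2) True assms(3-5)] assms(5) by auto
qed (simp add: mv_to_def)

lemma mv_to_front_or_stay_less_iff:
  assumes "distinct s" "a \<in> set s" "x \<in> set s" "y \<in> set s" "x \<noteq> y"
  shows "idx (mv_to (if P then 0 else idx s a) a s) x < idx (mv_to (if P then 0 else idx s a) a s) y
     \<longleftrightarrow> (if P \<and> (a = x \<or> a = y) then a = x else idx s x < idx s y)"
proof -
  have "idx s x \<noteq> idx s y" using assms idx_inj by metis
  then show ?thesis
    using mv_to_less_iff[OF assms(1,2), of "if P then 0 else idx s a", OF _ assms(3-5)] assms(5)
    by (auto split: if_splits)
qed

lemma swap_adj_perm: "distinct s \<Longrightarrow> distinct (swap_adj i s) \<and> set (swap_adj i s) = set s"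
  by (simp add: swap_adj_def)

lemma swaps_perm:
  "distinct s \<Longrightarrow> distinct (foldl (\<lambda>t i. swap_adj i t) s sw) \<and> set (foldl (\<lambda>t i. swap_adj i t) s sw) = set s"
proof (induction sw arbitrary: s)
  case (Cons i sw)
  then show ?case using Cons.IH[of "swap_adj i s"] swap_adj_perm[OF Cons.prems, of i] by simp
qed simp

lemma idx_swap_adj:
  assumes "distinct s" "Suc i < length s" "z \<in> set s"
  shows "idx (swap_adj i s) z = (if z = s ! i then Suc i else if z = s ! Suc i then i else idx s z)"
proof -
  let ?t = "s[i := s ! Suc i, Suc i := s ! i]"
  have d: "distinct ?t" using assms by simp
  have "s ! i \<noteq> s ! Suc i" using assms by (simp add: nth_eq_iff_index_eq)
  moreover have "idx ?t z = idx s z" if "z \<noteq> s ! i" "z \<noteq> s ! Suc i"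
  proof -
    have "idx s z \<noteq> i" "idx s z \<noteq> Suc i" using that nth_idx[OF assms(3)] by auto
    then have "?t ! idx s z = z" using nth_idx[OF assms(3)] by simp
    then show ?thesis using idx_nth[OF d, of "idx s z"] idx_less_length[OF assms(3)] by simp
  qed
  ultimately show ?thesis
    using idx_nth[OF d, of i] idx_nth[OF d, of "Suc i"] assms by (simp add: swap_adj_def)
qed

section \<open>Pairwise decomposition of the access cost\<close>

text \<open>The cost of a pair when the requested item is x iff \<open>b\<close>, and x is in front iff
  \<open>x_first\<close>.\<close>
definition pair_cost :: "bool \<Rightarrow> bool \<Rightarrow> nat" where
  "pair_cost x_first b = (if x_first = b then 0 else 1)"

lemma sum_sum_delta_left_right:
  assumes "finite D" "a \<in> D"
  shows "(\<Sum>x\<in>D. \<Sum>y\<in>D. (if x = a then g y else 0) + (if y = a then f x else 0)) =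
         (\<Sum>y\<in>D. g y) + (\<Sum>x\<in>D. (f x :: nat))"
proof -
  have "(\<Sum>y\<in>D. if x = a then g y else 0) = (if x = a then sum g D else 0)" for x
    by simp
  then show ?thesis using assms by (simp only: sum.distrib) (simp add: sum.delta)
qed

definition access_pair_cost :: "'a list \<Rightarrow> 'a \<Rightarrow> 'a list \<Rightarrow> 'a \<Rightarrow> 'a \<Rightarrow> nat" where
  "access_pair_cost init a s x y =
     (if idx init x < idx init y \<and> (a = x \<or> a = y) then pair_cost (idx s x < idx s y) (a = x) else 0)"

lemma idx_eq_sum_access_pair_cost:
  assumes "distinct s" "set s = set init" "a \<in> set init"
  shows "idx s a = (\<Sum>x\<in>set init. \<Sum>y\<in>set init. access_pair_cost init a s x y)"
proof -
  let ?D = "set init"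
  have "(\<Sum>x\<in>?D. \<Sum>y\<in>?D. access_pair_cost init a s x y)
      = (\<Sum>x\<in>?D. \<Sum>y\<in>?D. (if x = a then (if idx init a < idx init y then pair_cost (idx s a < idx s y) True else 0) else 0)
            + (if y = a then (if idx init x < idx init a then pair_cost (idx s x < idx s a) False else 0) else 0))"
    by (intro sum.cong refl) (auto simp: access_pair_cost_def)
  also have "\<dots> = (\<Sum>y\<in>?D. if idx init a < idx init y then pair_cost (idx s a < idx s y) True else 0)
      + (\<Sum>y\<in>?D. if idx init y < idx init a then pair_cost (idx s y < idx s a) False else 0)"
    by (rule sum_sum_delta_left_right) (use assms(3) in auto)
  also have "\<dots> = (\<Sum>y\<in>?D. if idx s y < idx s a then 1 else 0)"
    unfolding sum.distrib[symmetric]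
  proof (rule sum.cong[OF refl])
    fix y assume yD: "y \<in> ?D"
    show "(if idx init a < idx init y then pair_cost (idx s a < idx s y) True else 0) +
          (if idx init y < idx init a then pair_cost (idx s y < idx s a) False else 0) =
          (if idx s y < idx s a then 1 else 0)"
    proof (cases "y = a")
      case False
      have "idx init y \<noteq> idx init a" "idx s y \<noteq> idx s a"
        using False yD assms idx_inj by metis+
      then show ?thesis by (auto simp: pair_cost_def)
    qed simp
  qed
  also have "\<dots> = card {y \<in> ?D. idx s y < idx s a}"
    by (simp add: sum.If_cases Int_def conj_commute)
  also have "\<dots> = idx s a" using card_idx_less[OF assms(1)] assms(2,3) by simp
  finally show ?thesis by simp
qed

definition orders_pairs :: "'a list \<Rightarrow> ('a \<Rightarrow> 'a \<Rightarrow> bool) \<Rightarrow> 'a list \<Rightarrow> bool" where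
  "orders_pairs init P s \<longleftrightarrow> distinct s \<and> set s = set init \<and>
     (\<forall>x\<in>set init. \<forall>y\<in>set init. idx init x < idx init y \<longrightarrow> (idx s x < idx s y \<longleftrightarrow> P x y))"

definition last_n :: "nat \<Rightarrow> 'b list \<Rightarrow> 'b list" where
  "last_n n xs = drop (length xs - n) xs"

lemma last_n_append: "last_n n (xs @ ys) = last_n (n - length ys) xs @ last_n n ys"
  by (cases "n \<le> length ys") (auto simp: last_n_def drop_append)

lemma last_n_last_n: "n \<le> m \<Longrightarrow> last_n n (last_n m xs) = last_n n xs"
  by (simp add: last_n_def) (rule arg_cong[where f="\<lambda>k. drop k xs"], arith)

lemma length_last_n: "length (last_n n xs) = min n (length xs)"
  by (auto simp: last_n_def)

lemma set_last_n: "set (last_n n xs) \<subseteq> set xs"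
  by (auto simp: last_n_def dest: in_set_dropD)

lemma last_n_3_snoc: "last_n 3 (xs @ [c]) = last_n 2 xs @ [c]"
  by (simp add: last_n_append last_n_def)

lemma last_n_map: "last_n n (map f xs) = map f (last_n n xs)"
  by (simp add: last_n_def drop_map)

lemma count_list_last_n_le: "count_list (last_n n xs) x \<le> count_list xs x"
  by (metis append_take_drop_id count_list_append last_n_def le_add2)

lemma count_list_filter: "count_list (filter P xs) x = (if P x then count_list xs x else 0)"
  by (induction xs) auto

lemma count_list_two_values:
  "set xs \<subseteq> {u, v} \<Longrightarrow> u \<noteq> v \<Longrightarrow> count_list xs u + count_list xs v = length xs"
  by (induction xs) auto

definition pair_proj :: "'a list \<Rightarrow> 'a \<Rightarrow> 'a \<Rightarrow> 'a list" where
  "pair_proj h u v = filter (\<lambda>z. z \<in> {u, v}) h"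

lemma pair_proj_commute: "pair_proj h v u = pair_proj h u v"
  by (simp add: pair_proj_def insert_commute)

lemma last_3_pair_proj: "length (last_n 3 (pair_proj h u v)) \<le> 3 \<and> set (last_n 3 (pair_proj h u v)) \<subseteq> {u, v}"
  using set_last_n[of 3 "pair_proj h u v"] length_last_n[of 3 "pair_proj h u v"]
  by (auto simp: pair_proj_def)

lemma short_list_cases:
  assumes "length xs \<le> 3" "set xs \<subseteq> A" "P []" "\<And>c1. c1 \<in> A \<Longrightarrow> P [c1]"
    "\<And>c1 c2. c1 \<in> A \<Longrightarrow> c2 \<in> A \<Longrightarrow> P [c1, c2]"
    "\<And>c1 c2 c3. c1 \<in> A \<Longrightarrow> c2 \<in> A \<Longrightarrow> c3 \<in> A \<Longrightarrow> P [c1, c2, c3]"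
  shows "P xs"
  using assms by (cases xs rule: remdups_adj.cases) (auto simp: le_Suc_eq length_Suc_conv)

section \<open>The order kept by TS\<close>

text \<open>The order TS keeps on two items depends only on the last three requests to them.\<close>
definition recent_before :: "'a list \<Rightarrow> 'a list \<Rightarrow> 'a \<Rightarrow> 'a \<Rightarrow> bool" where
  "recent_before init M u v \<longleftrightarrow>
     2 \<le> count_list M u \<or> (count_list M u \<le> 1 \<and> count_list M v \<le> 1 \<and> idx init u < idx init v)"

definition ts_before :: "'a list \<Rightarrow> 'a list \<Rightarrow> 'a \<Rightarrow> 'a \<Rightarrow> bool" where
  "ts_before init h u v = recent_before init (last_n 3 (pair_proj h u v)) u v"

lemma ts_before_Nil: "ts_before init [] u v \<longleftrightarrow> idx init u < idx init v"
  by (simp add: ts_before_def recent_before_def pair_proj_def last_n_def)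

lemma ts_before_commute:
  assumes "u \<noteq> v" "idx init u \<noteq> idx init v"
  shows "ts_before init h v u \<longleftrightarrow> \<not> ts_before init h u v"
proof -
  define M where "M = last_n 3 (pair_proj h u v)"
  have "length M \<le> 3" "set M \<subseteq> {u, v}" using last_3_pair_proj[of h u v] M_def by auto
  then have "recent_before init M v u \<longleftrightarrow> \<not> recent_before init M u v"
    by (rule short_list_cases) (use assms in \<open>auto simp: recent_before_def\<close>)
  then show ?thesis by (simp add: ts_before_def pair_proj_commute[of h v u] M_def)
qed

lemma ts_before_snoc_other: "a \<noteq> u \<Longrightarrow> a \<noteq> v \<Longrightarrow> ts_before init (h @ [a]) u v = ts_before init h u v"
  by (simp add: ts_before_def pair_proj_def)

lemma ts_before_snoc:
  assumes "a \<noteq> y"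
  shows "ts_before init (h @ [a]) a y \<longleftrightarrow> ts_before init h a y \<or> a \<in> set (last_n 2 (pair_proj h a y))"
proof -
  define M where "M = last_n 3 (pair_proj h a y)"
  have last2: "last_n 2 (pair_proj h a y) = last_n 2 M"
    using M_def last_n_last_n[of 2 3 "pair_proj h a y"] by simp
  have last3: "last_n 3 (pair_proj (h @ [a]) a y) = last_n 2 M @ [a]"
    using last2 by (simp add: pair_proj_def last_n_3_snoc)
  have "length M \<le> 3" "set M \<subseteq> {a, y}" using last_3_pair_proj[of h a y] M_def by auto
  then have "recent_before init (last_n 2 M @ [a]) a y \<longleftrightarrow> recent_before init M a y \<or> a \<in> set (last_n 2 M)"
    by (rule short_list_cases) (use assms in \<open>auto simp: recent_before_def last_n_def\<close>)
  then show ?thesis by (simp add: ts_before_def last3 last2 M_def)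
qed

lemma not_ts_before_recent:
  assumes "z \<noteq> y" "count_list seg z \<le> 1" "2 \<le> count_list seg y"
  shows "\<not> ts_before init (pre @ seg) z y"
proof -
  define Q where "Q = pair_proj seg z y"
  define M where "M = last_n 3 (pair_proj (pre @ seg) z y)"
  have Q: "set Q \<subseteq> {z, y}" "count_list Q z \<le> 1" "2 \<le> count_list Q y"
    using assms by (auto simp: Q_def pair_proj_def count_list_filter)
  have "2 \<le> count_list (last_n 3 Q) y"
  proof (cases "length Q \<le> 3")
    case True
    then show ?thesis using Q by (simp add: last_n_def)
  next
    case False
    have "set (last_n 3 Q) \<subseteq> {z, y}" using set_last_n Q(1) by (rule subset_trans)
    then have "count_list (last_n 3 Q) z + count_list (last_n 3 Q) y = length (last_n 3 Q)"
      by (rule count_list_two_values[OF _ assms(1)])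
    moreover have "length (last_n 3 Q) = 3" using False length_last_n[of 3 Q] by simp
    moreover have "count_list (last_n 3 Q) z \<le> 1" using count_list_last_n_le[of 3 Q z] Q(2) by (rule le_trans)
    ultimately show ?thesis by linarith
  qed
  moreover have "M = last_n (3 - length Q) (pair_proj pre z y) @ last_n 3 Q"
    by (simp add: M_def Q_def pair_proj_def last_n_append)
  ultimately have "2 \<le> count_list M y" by simp
  moreover have "count_list M z + count_list M y \<le> 3"
    using count_list_two_values[of M z y] last_3_pair_proj[of "pre @ seg" z y] assms(1) M_def by simp
  ultimately show ?thesis by (simp add: ts_before_def recent_before_def M_def)
qed

lemma last_request_split:
  assumes "a \<in> set h"
  defines "j \<equiv> length h - 1 - idx (rev h) a"
  shows "h = take j h @ a # drop (Suc j) h" "a \<notin> set (drop (Suc j) h)"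
proof -
  define k where "k = idx (rev h) a"
  have ar: "a \<in> set (rev h)" using assms by simp
  have kl: "k < length h" using idx_less_length[OF ar] k_def by simp
  have "h ! j = a" using nth_idx[OF ar] kl by (simp add: rev_nth j_def k_def)
  moreover have "j < length h" using kl by (simp add: j_def)
  ultimately show "h = take j h @ a # drop (Suc j) h" using id_take_nth_drop by fastforce
  have "drop (Suc j) h = rev (take k (rev h))" using kl by (simp add: rev_take j_def k_def Suc_diff_Suc)
  moreover have "a \<notin> set (take k (rev h))" using in_set_take_iff_idx_less[OF ar, of k] k_def by simp
  ultimately show "a \<notin> set (drop (Suc j) h)" by simp
qed

lemma count_since_last_le_1_iff:
  assumes "h = pre @ a # seg" "a \<notin> set seg" "y \<noteq> a"
  shows "count_list seg y \<le> 1 \<longleftrightarrow> a \<in> set (last_n 2 (pair_proj h a y))"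
proof -
  define c where "c = count_list seg y"
  have "filter (\<lambda>z. z \<in> {a, y}) xs = replicate (count_list xs y) y" if "a \<notin> set xs" for xs
    using that by (induction xs) auto
  then have "pair_proj h a y = pair_proj pre a y @ a # replicate c y"
    using assms(1,2) by (simp add: pair_proj_def c_def)
  then have last2: "last_n 2 (pair_proj h a y) = last_n (2 - Suc c) (pair_proj pre a y) @ last_n 2 (a # replicate c y)"
    by (simp add: last_n_append)
  show ?thesis
  proof (cases "c \<le> 1")
    case True
    then show ?thesis using last2 c_def by (simp add: last_n_def)
  next
    case False
    then have "\<exists>d. c = Suc (Suc d)" by presburger
    then obtain d where d: "c = Suc (Suc d)" by blast
    have "last_n 2 (a # replicate c y) = replicate 2 y"
      unfolding d last_n_def by (simp del: replicate_Suc add: drop_replicate)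
    then have "last_n 2 (pair_proj h a y) = replicate 2 y" using last2 d by (simp add: last_n_def)
    then show ?thesis using False assms(3) c_def by simp
  qed
qed

lemma ts_rule_le_idx: "ts_rule h s a \<le> idx s a"
proof -
  have "hd (filter P [0..<idx s a]) \<le> idx s a" if "filter P [0..<idx s a] \<noteq> []" for P
    using hd_in_set[OF that] by simp
  then show ?thesis by (simp add: ts_rule_def Let_def)
qed

lemma hd_filter_upt_le_iff:
  assumes "m < n"
  shows "(if filter P [0..<n] = [] then n else hd (filter P [0..<n])) \<le> m \<longleftrightarrow> (\<exists>i\<le>m. P i)"
proof
  assume "(if filter P [0..<n] = [] then n else hd (filter P [0..<n])) \<le> m"
  then show "\<exists>i\<le>m. P i"
    using assms hd_in_set[of "filter P [0..<n]"] by (auto split: if_splits)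
next
  assume "\<exists>i\<le>m. P i"
  then obtain i where i: "i \<le> m" "P i" by blast
  then have "i \<in> set (filter P [0..<n])" using assms by simp
  moreover have "sorted (filter P [0..<n])" by (simp add: sorted_wrt_filter)
  ultimately have "filter P [0..<n] \<noteq> [] \<and> hd (filter P [0..<n]) \<le> i"
    by (cases "filter P [0..<n]") auto
  then show "(if filter P [0..<n] = [] then n else hd (filter P [0..<n])) \<le> m" using i by simp
qed

lemma ts_rule_le_idx_iff:
  assumes "distinct s" "a \<in> set s" "y \<in> set s" "idx s y < idx s a"
    and inv: "\<forall>u\<in>set s. \<forall>v\<in>set s. u \<noteq> v \<longrightarrow> (idx s u < idx s v \<longleftrightarrow> ts_before init h u v)"
  shows "ts_rule h s a \<le> idx s y \<longleftrightarrow> a \<in> set (last_n 2 (pair_proj h a y))"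
proof (cases "a \<in> set h")
  case False
  then have "a \<notin> set (last_n 2 (pair_proj h a y))" using set_last_n by (force simp: pair_proj_def)
  then show ?thesis using False assms(4) by (simp add: ts_rule_def)
next
  case True
  define j where "j = length h - 1 - idx (rev h) a"
  define seg where "seg = drop (Suc j) h"
  have split: "h = take j h @ a # seg" "a \<notin> set seg"
    using last_request_split[OF True] by (simp_all add: j_def seg_def)
  have ya: "y \<noteq> a" using assms(4) by auto
  define P where "P = (\<lambda>i. count_list seg (s ! i) \<le> 1)"
  have "ts_rule h s a = (if filter P [0..<idx s a] = [] then idx s a else hd (filter P [0..<idx s a]))"
    using True by (simp add: ts_rule_def j_def seg_def P_def Let_def)
  then have "ts_rule h s a \<le> idx s y \<longleftrightarrow> (\<exists>i\<le>idx s y. count_list seg (s ! i) \<le> 1)"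
    using hd_filter_upt_le_iff[OF assms(4), of P] by (simp add: P_def)
  also have "\<dots> \<longleftrightarrow> count_list seg y \<le> 1"
  proof
    assume "\<exists>i\<le>idx s y. count_list seg (s ! i) \<le> 1"
    then obtain i where i: "i \<le> idx s y" "count_list seg (s ! i) \<le> 1" by blast
    show "count_list seg y \<le> 1"
    proof (cases "i = idx s y")
      case True
      then show ?thesis using i(2) nth_idx[OF assms(3)] by simp
    next
      case False
      define z where "z = s ! i"
      have "i < length s" using i(1) assms(4) idx_less_length[OF assms(2)] by simp
      then have zS: "z \<in> set s" and iz: "idx s z = i" using idx_nth[OF assms(1)] by (auto simp: z_def)
      then have "ts_before init h z y" using inv assms(3) False i(1) by fastforce
      moreover have "z \<noteq> y" using iz False by auto
      ultimately show ?thesis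
        using not_ts_before_recent[where pre="take j h @ [a]" and seg=seg] split(1) i(2) z_def by fastforce
    qed
  next
    assume "count_list seg y \<le> 1"
    then show "\<exists>i\<le>idx s y. count_list seg (s ! i) \<le> 1"
      using nth_idx[OF assms(3)] by auto
  qed
  also have "\<dots> \<longleftrightarrow> a \<in> set (last_n 2 (pair_proj h a y))"
    using count_since_last_le_1_iff[OF split ya] .
  finally show ?thesis .
qed

lemma orders_pairs_ts_before_iff:
  "orders_pairs init (ts_before init h) s \<longleftrightarrow> distinct s \<and> set s = set init \<and>
     (\<forall>u\<in>set init. \<forall>v\<in>set init. u \<noteq> v \<longrightarrow> (idx s u < idx s v \<longleftrightarrow> ts_before init h u v))"
proof
  assume inv: "orders_pairs init (ts_before init h) s"
  have "idx s u < idx s v \<longleftrightarrow> ts_before init h u v"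
    if "u \<in> set init" "v \<in> set init" "u \<noteq> v" for u v
  proof -
    have ne: "idx init u \<noteq> idx init v" "idx s u \<noteq> idx s v"
      using that inv idx_inj unfolding orders_pairs_def by metis+
    show ?thesis
    proof (cases "idx init u < idx init v")
      case True
      then show ?thesis using inv that unfolding orders_pairs_def by blast
    next
      case False
      then have "idx s v < idx s u \<longleftrightarrow> ts_before init h v u"
        using inv that ne(1) unfolding orders_pairs_def by auto
      then show ?thesis
        using ts_before_commute[of u v init h] that ne by auto
    qed
  qed
  then show "distinct s \<and> set s = set init \<and>
     (\<forall>u\<in>set init. \<forall>v\<in>set init. u \<noteq> v \<longrightarrow> (idx s u < idx s v \<longleftrightarrow> ts_before init h u v))"
    using inv unfolding orders_pairs_def by blast
qed (auto simp: orders_pairs_def)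

lemma ts_step:
  assumes "orders_pairs init (ts_before init h) s" "a \<in> set init"
  shows "orders_pairs init (ts_before init (h @ [a])) (mv_to (ts_rule h s a) a s)"
proof -
  let ?k = "ts_rule h s a" and ?s' = "mv_to (ts_rule h s a) a s"
  have ds: "distinct s" "set s = set init"
    and inv: "\<forall>u\<in>set init. \<forall>v\<in>set init. u \<noteq> v \<longrightarrow> (idx s u < idx s v \<longleftrightarrow> ts_before init h u v)"
    using assms(1) by (auto simp: orders_pairs_ts_before_iff)
  have aS: "a \<in> set s" using assms(2) ds by simp
  have inv_s: "\<forall>u\<in>set s. \<forall>v\<in>set s. u \<noteq> v \<longrightarrow> (idx s u < idx s v \<longleftrightarrow> ts_before init h u v)"
    using inv ds(2) by simp
  have "idx ?s' u < idx ?s' v \<longleftrightarrow> ts_before init (h @ [a]) u v"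
    if uD: "u \<in> set init" and vD: "v \<in> set init" and uv: "u \<noteq> v" for u v
  proof -
    have us: "u \<in> set s" "v \<in> set s" using uD vD ds by auto
    have moved: "idx ?s' u < idx ?s' v \<longleftrightarrow> (if a = u then idx s u < idx s v \<or> ?k \<le> idx s v
       else if a = v then idx s u < idx s v \<and> \<not> ?k \<le> idx s u else idx s u < idx s v)"
      by (rule mv_to_less_iff[OF ds(1) aS ts_rule_le_idx us uv])
    have "idx s u \<noteq> idx s v" "idx init u \<noteq> idx init v" using us uD vD uv idx_inj by metis+
    moreover have old: "idx s u < idx s v \<longleftrightarrow> ts_before init h u v" using inv uD vD uv by blast
    moreover have key: "ts_rule h s a \<le> idx s y \<longleftrightarrow> a \<in> set (last_n 2 (pair_proj h a y))"
      if "y \<in> set s" "idx s y < idx s a" for y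
      by (rule ts_rule_le_idx_iff[OF ds(1) aS that inv_s])
    ultimately show ?thesis
      using moved uv ts_before_snoc[of u v init h] ts_before_snoc[of v u init h]
        ts_before_commute[of u v init h] ts_before_commute[of u v init "h @ [a]"]
        ts_before_snoc_other[of a u v init h] key[OF us(1)] key[OF us(2)]
      by (cases "a = u"; cases "a = v") auto
  qed
  then show ?thesis using mv_to_perm[OF ds(1) aS] ds(2)
    by (simp add: orders_pairs_ts_before_iff)
qed

section \<open>The pair automaton\<close>

text \<open>The state of a pair of items x, y, where x precedes y initially: the last at most three
  requests to x or y (\<open>True\<close> for x), the parities of the numbers of requests to x and to y,
  and whether MTFO resp. MTFE keeps x in front of y.\<close>
type_synonym pair_state = "bool list \<times> bool \<times> bool \<times> bool \<times> bool"

fun pair_step :: "pair_state \<Rightarrow> bool \<Rightarrow> pair_state" where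
  "pair_step (l, odd_x, odd_y, mtfo, mtfe) b =
     (let odd_before = (if b then odd_x else odd_y)
      in (last_n 3 (l @ [b]), odd_x \<noteq> b, odd_y = b,
          if odd_before then mtfo else b, if odd_before then b else mtfe))"

fun mtfo_x_first :: "pair_state \<Rightarrow> bool" where
  "mtfo_x_first (_, _, _, mtfo, _) = mtfo"

fun mtfe_x_first :: "pair_state \<Rightarrow> bool" where
  "mtfe_x_first (_, _, _, _, mtfe) = mtfe"

definition ts_x_first :: "bool list \<Rightarrow> bool" where
  "ts_x_first l \<longleftrightarrow> 2 \<le> count_list l True \<or> (count_list l True \<le> 1 \<and> count_list l False \<le> 1)"

text \<open>The reachable states, each with its potential when OPT keeps x in front of y and when
  it keeps y in front of x.\<close>
definition potential_table :: "(pair_state \<times> nat \<times> nat) list" where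
  "potential_table = [
  (([], False, False, True, True), 0, 5),
  (([False, False], False, False, False, False), 5, 0),
  (([False, False, False], False, False, False, False), 5, 0),
  (([False, False, False], False, True, False, False), 5, 0),
  (([False, False, False], True, False, False, False), 5, 0),
  (([False, False, False], True, True, False, False), 5, 0),
  (([False, False, True], False, False, False, True), 2, 2),
  (([False, False, True], False, True, False, True), 2, 2),
  (([False, False, True], True, False, True, False), 2, 2),
  (([False, False, True], True, True, True, False), 2, 2),
  (([False, True], True, True, True, True), 1, 6),
  (([False, True, False], False, False, False, False), 4, 1),
  (([False, True, False], False, True, False, True), 3, 1),
  (([False, True, False], True, False, True, False), 3, 1),
  (([False, True, False], True, True, False, False), 4, 1),
  (([False, True, True], False, False, True, True), 0, 5),
  (([False, True, True], False, True, True, True), 0, 5),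
  (([False, True, True], True, False, True, True), 0, 5),
  (([False, True, True], True, True, True, True), 0, 5),
  (([False], False, True, False, True), 2, 2),
  (([True, False], True, True, False, True), 2, 2),
  (([True, False, False], False, False, False, False), 5, 0),
  (([True, False, False], False, True, False, False), 5, 0),
  (([True, False, False], True, False, False, False), 5, 0),
  (([True, False, False], True, True, False, False), 5, 0),
  (([True, False, True], False, False, True, True), 1, 4),
  (([True, False, True], False, True, False, True), 1, 3),
  (([True, False, True], True, False, True, False), 1, 3),
  (([True, False, True], True, True, True, True), 1, 4),
  (([True, True], False, False, True, True), 0, 5),
  (([True, True, False], False, False, True, False), 2, 2),
  (([True, True, False], False, True, False, True), 2, 2),
  (([True, True, False], True, False, True, False), 2, 2),
  (([True, True, False], True, True, False, True), 2, 2),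
  (([True, True, True], False, False, True, True), 0, 5),
  (([True, True, True], False, True, True, True), 0, 5),
  (([True, True, True], True, False, True, True), 0, 5),
  (([True, True, True], True, True, True, True), 0, 5),
  (([True], True, False, True, True), 0, 5)]"

definition pair_states :: "pair_state list" where
  "pair_states = map fst potential_table"

definition pair_potential :: "pair_state \<Rightarrow> bool \<Rightarrow> nat" where
  "pair_potential q x_first =
     (case map_of potential_table q of Some (p, p') \<Rightarrow> if x_first then p else p' | None \<Rightarrow> 0)"

lemma pair_states_closed:
  "list_all (\<lambda>q. pair_step q True \<in> set pair_states \<and> pair_step q False \<in> set pair_states) pair_states"
  by code_simp

lemma pair_potential_flip_check:
  "list_all (\<lambda>q. pair_potential q True \<le> pair_potential q False + 5 \<and>
                 pair_potential q False \<le> pair_potential q True + 5) pair_states"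
  by code_simp

text \<open>One request to x (\<open>b\<close>) or y (\<open>\<not> b\<close>): \<open>c\<close> is the order of OPT at the access and
  \<open>c'\<close> its order after the free exchange, which at most brings the requested item in front.\<close>
lemma pair_amortized_check:
  "list_all (\<lambda>q. list_all (\<lambda>b. list_all (\<lambda>c. list_all (\<lambda>c'. (c' = c \<or> c' = b) \<longrightarrow>
     pair_cost (ts_x_first (fst q)) b + pair_cost (mtfo_x_first q) b + pair_cost (mtfe_x_first q) b
       + pair_potential (pair_step q b) c'
     \<le> pair_potential q c + 5 * pair_cost c b)
   [True, False]) [True, False]) [True, False]) pair_states"
  by code_simp

lemma pair_step_in_pair_states: "q \<in> set pair_states \<Longrightarrow> pair_step q b \<in> set pair_states"
  using pair_states_closed by (cases b) (auto simp: list_all_iff)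

lemma pair_potential_flip: "q \<in> set pair_states \<Longrightarrow> pair_potential q c' \<le> pair_potential q c + 5"
  using pair_potential_flip_check by (cases c; cases c') (auto simp: list_all_iff)

lemma pair_amortized:
  assumes "q \<in> set pair_states" "c' = c \<or> c' = b"
  shows "pair_cost (ts_x_first (fst q)) b + pair_cost (mtfo_x_first q) b + pair_cost (mtfe_x_first q) b
       + pair_potential (pair_step q b) c' \<le> pair_potential q c + 5 * pair_cost c b"
  using pair_amortized_check assms by (cases b; cases c; cases c') (auto simp: list_all_iff)

definition pair_state_of :: "'a \<Rightarrow> 'a \<Rightarrow> 'a list \<Rightarrow> pair_state" where
  "pair_state_of x y h =
     foldl (\<lambda>q z. if z = x then pair_step q True else if z = y then pair_step q False else q)
       ([], False, False, True, True) h"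

lemma pair_state_of_Nil: "pair_state_of x y [] = ([], False, False, True, True)"
  by (simp add: pair_state_of_def)

lemma pair_state_of_snoc:
  "pair_state_of x y (h @ [a]) = (if a = x then pair_step (pair_state_of x y h) True
     else if a = y then pair_step (pair_state_of x y h) False else pair_state_of x y h)"
  by (simp add: pair_state_of_def)

lemma pair_state_of_in_pair_states: "pair_state_of x y h \<in> set pair_states"
proof (induction h rule: rev_induct)
  case Nil
  then show ?case by (simp add: pair_state_of_Nil pair_states_def potential_table_def)
qed (simp add: pair_state_of_snoc pair_step_in_pair_states)

lemma pair_state_of_eq:
  assumes "x \<noteq> y"
  shows "\<exists>mtfo mtfe. pair_state_of x y h = (map (\<lambda>z. z = x) (last_n 3 (pair_proj h x y)),
    odd (count_list h x), odd (count_list h y), mtfo, mtfe)"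
proof (induction h rule: rev_induct)
  case Nil
  then show ?case by (auto simp: pair_state_of_Nil pair_proj_def last_n_def)
next
  case (snoc a h)
  then obtain mtfo mtfe where IH: "pair_state_of x y h = (map (\<lambda>z. z = x) (last_n 3 (pair_proj h x y)),
    odd (count_list h x), odd (count_list h y), mtfo, mtfe)" by blast
  have "last_n 3 (map (\<lambda>z. z = x) (last_n 3 (pair_proj h x y)) @ [a = x])
      = map (\<lambda>z. z = x) (last_n 3 (pair_proj h x y @ [a]))"
    by (simp add: last_n_3_snoc last_n_last_n last_n_map)
  then show ?case using IH assms by (auto simp: pair_state_of_snoc pair_proj_def Let_def)
qed

lemma ts_before_iff_ts_x_first:
  assumes "x \<noteq> y" "idx init x < idx init y"
  shows "ts_before init h x y \<longleftrightarrow> ts_x_first (fst (pair_state_of x y h))"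
proof -
  define M where "M = last_n 3 (pair_proj h x y)"
  have "length M \<le> 3" "set M \<subseteq> {x, y}" using last_3_pair_proj[of h x y] M_def by auto
  then have "recent_before init M x y \<longleftrightarrow> ts_x_first (map (\<lambda>z. z = x) M)"
    by (rule short_list_cases) (use assms in \<open>auto simp: recent_before_def ts_x_first_def\<close>)
  then show ?thesis using pair_state_of_eq[OF assms(1), of h] by (auto simp: ts_before_def M_def)
qed

lemma pair_state_of_snoc_mtf:
  assumes "x \<noteq> y" "a = x \<or> a = y"
  shows "mtfo_x_first (pair_state_of x y (h @ [a])) =
           (if even (count_list h a) then a = x else mtfo_x_first (pair_state_of x y h))"
    "mtfe_x_first (pair_state_of x y (h @ [a])) =
           (if odd (count_list h a) then a = x else mtfe_x_first (pair_state_of x y h))"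
  using pair_state_of_eq[OF assms(1), of h] assms by (auto simp: pair_state_of_snoc Let_def)

lemma mtfo_step:
  assumes "orders_pairs init (\<lambda>x y. mtfo_x_first (pair_state_of x y h)) s" "a \<in> set init"
  shows "orders_pairs init (\<lambda>x y. mtfo_x_first (pair_state_of x y (h @ [a]))) (mv_to (mtfo_rule h s a) a s)"
proof -
  have ds: "distinct s" "set s = set init" using assms(1) by (simp_all add: orders_pairs_def)
  have "idx (mv_to (mtfo_rule h s a) a s) x < idx (mv_to (mtfo_rule h s a) a s) y
      \<longleftrightarrow> mtfo_x_first (pair_state_of x y (h @ [a]))"
    if "x \<in> set init" "y \<in> set init" "idx init x < idx init y" for x y
  proof -
    have xy: "x \<noteq> y" using that(3) by auto
    have S: "x \<in> set s" "y \<in> set s" "a \<in> set s" using that(1,2) assms(2) ds(2) by auto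
    have "idx (mv_to (mtfo_rule h s a) a s) x < idx (mv_to (mtfo_rule h s a) a s) y
        \<longleftrightarrow> (if even (count_list h a) \<and> (a = x \<or> a = y) then a = x else idx s x < idx s y)"
      unfolding mtfo_rule_def by (rule mv_to_front_or_stay_less_iff[OF ds(1) S(3,1,2) xy])
    moreover have "idx s x < idx s y \<longleftrightarrow> mtfo_x_first (pair_state_of x y h)"
      using assms(1) that by (simp add: orders_pairs_def)
    ultimately show ?thesis using pair_state_of_snoc_mtf(1)[OF xy, of a h]
      by (cases "a = x \<or> a = y") (auto simp: pair_state_of_snoc)
  qed
  then show ?thesis using mv_to_perm[OF ds(1)] ds(2) assms(2) by (simp add: orders_pairs_def)
qed

lemma mtfe_step:
  assumes "orders_pairs init (\<lambda>x y. mtfe_x_first (pair_state_of x y h)) s" "a \<in> set init"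
  shows "orders_pairs init (\<lambda>x y. mtfe_x_first (pair_state_of x y (h @ [a]))) (mv_to (mtfe_rule h s a) a s)"
proof -
  have ds: "distinct s" "set s = set init" using assms(1) by (simp_all add: orders_pairs_def)
  have "idx (mv_to (mtfe_rule h s a) a s) x < idx (mv_to (mtfe_rule h s a) a s) y
      \<longleftrightarrow> mtfe_x_first (pair_state_of x y (h @ [a]))"
    if "x \<in> set init" "y \<in> set init" "idx init x < idx init y" for x y
  proof -
    have xy: "x \<noteq> y" using that(3) by auto
    have S: "x \<in> set s" "y \<in> set s" "a \<in> set s" using that(1,2) assms(2) ds(2) by auto
    have "idx (mv_to (mtfe_rule h s a) a s) x < idx (mv_to (mtfe_rule h s a) a s) y
        \<longleftrightarrow> (if odd (count_list h a) \<and> (a = x \<or> a = y) then a = x else idx s x < idx s y)"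
      unfolding mtfe_rule_def by (rule mv_to_front_or_stay_less_iff[OF ds(1) S(3,1,2) xy])
    moreover have "idx s x < idx s y \<longleftrightarrow> mtfe_x_first (pair_state_of x y h)"
      using assms(1) that by (simp add: orders_pairs_def)
    ultimately show ?thesis using pair_state_of_snoc_mtf(2)[OF xy, of a h]
      by (cases "a = x \<or> a = y") (auto simp: pair_state_of_snoc)
  qed
  then show ?thesis using mv_to_perm[OF ds(1)] ds(2) assms(2) by (simp add: orders_pairs_def)
qed

section \<open>The potential\<close>

definition pair_potential_term :: "'a list \<Rightarrow> 'a list \<Rightarrow> 'a list \<Rightarrow> 'a \<Rightarrow> 'a \<Rightarrow> nat" where
  "pair_potential_term init h s x y =
     (if idx init x < idx init y then pair_potential (pair_state_of x y h) (idx s x < idx s y) else 0)"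

definition potential :: "'a list \<Rightarrow> 'a list \<Rightarrow> 'a list \<Rightarrow> nat" where
  "potential init h s = (\<Sum>x\<in>set init. \<Sum>y\<in>set init. pair_potential_term init h s x y)"

lemma potential_Nil: "potential init [] init = 0"
proof -
  have "pair_potential ([], False, False, True, True) True = 0" by code_simp
  then show ?thesis by (simp add: potential_def pair_potential_term_def pair_state_of_Nil)
qed

lemma swap_adj_less_iff:
  assumes "distinct s" "x \<in> set s" "y \<in> set s" "x \<noteq> y" "{x, y} \<noteq> {s ! i, s ! Suc i}"
  shows "idx (swap_adj i s) x < idx (swap_adj i s) y \<longleftrightarrow> idx s x < idx s y"
proof (cases "Suc i < length s")
  case True
  have ix: "idx s z = i \<longleftrightarrow> z = s ! i" "idx s z = Suc i \<longleftrightarrow> z = s ! Suc i" if "z \<in> set s" for z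
    using nth_idx[OF that] idx_nth[OF assms(1)] True by auto
  show ?thesis
    using idx_swap_adj[OF assms(1) True assms(2)] idx_swap_adj[OF assms(1) True assms(3)] assms(4,5)
      ix[OF assms(2)] ix[OF assms(3)]
    by (auto simp: doubleton_eq_iff)
qed (simp add: swap_adj_def)

lemma potential_swap_adj:
  assumes "distinct s" "set s = set init"
  shows "potential init h (swap_adj i s) \<le> potential init h s + 5"
proof -
  define m1 where "m1 = (if idx init (s ! i) < idx init (s ! Suc i) then s ! i else s ! Suc i)"
  define m2 where "m2 = (if idx init (s ! i) < idx init (s ! Suc i) then s ! Suc i else s ! i)"
  have bound: "pair_potential_term init h (swap_adj i s) x y
      \<le> pair_potential_term init h s x y + (if x = m1 then if y = m2 then 5 else 0 else 0)"
    if "x \<in> set init" "y \<in> set init" for x y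
  proof (cases "idx init x < idx init y")
    case True
    show ?thesis
    proof (cases "{x, y} = {s ! i, s ! Suc i}")
      case same: True
      then have "x = m1 \<and> y = m2" using True by (auto simp: m1_def m2_def doubleton_eq_iff)
      then show ?thesis
        using True pair_potential_flip[OF pair_state_of_in_pair_states] by (simp add: pair_potential_term_def)
    next
      case False
      have "x \<noteq> y" using True by auto
      then have "idx (swap_adj i s) x < idx (swap_adj i s) y \<longleftrightarrow> idx s x < idx s y"
        using swap_adj_less_iff[OF assms(1) _ _ _ False] that assms(2) by simp
      then show ?thesis by (simp add: pair_potential_term_def)
    qed
  qed (simp add: pair_potential_term_def)
  have "potential init h (swap_adj i s) \<le> (\<Sum>x\<in>set init. \<Sum>y\<in>set init.
      pair_potential_term init h s x y + (if x = m1 then if y = m2 then 5 else 0 else 0))"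
    unfolding potential_def by (intro sum_mono bound)
  also have "\<dots> = potential init h s + (\<Sum>x\<in>set init. \<Sum>y\<in>set init. if x = m1 then if y = m2 then 5 else 0 else 0)"
    by (simp add: potential_def sum.distrib)
  also have "(\<Sum>x\<in>set init. \<Sum>y\<in>set init. if x = m1 then if y = m2 then 5 else 0 else 0) \<le> (5::nat)"
  proof -
    have "(\<Sum>y\<in>set init. if x = m1 then if y = m2 then 5 else 0 else 0) =
        (if x = m1 then if m2 \<in> set init then 5 else 0 else (0::nat))" for x
      by (cases "x = m1") (simp_all add: sum.delta)
    then show ?thesis by (simp add: sum.delta)
  qed
  finally show ?thesis by simp
qed

lemma potential_paid_exchanges:
  assumes "distinct s" "set s = set init"
  shows "potential init h (foldl (\<lambda>t i. swap_adj i t) s sw) \<le> potential init h s + 5 * length sw"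
  using assms
proof (induction sw arbitrary: s)
  case (Cons i sw)
  have "distinct (swap_adj i s)" "set (swap_adj i s) = set init" using swap_adj_perm Cons.prems by auto
  then show ?case using Cons.IH[of "swap_adj i s"] potential_swap_adj[OF Cons.prems, of h i] by simp
qed simp

section \<open>Amortized cost of an access\<close>

lemma amortized_access_pair:
  assumes ts: "orders_pairs init (ts_before init h) sT"
    and mtfo: "orders_pairs init (\<lambda>x y. mtfo_x_first (pair_state_of x y h)) sO"
    and mtfe: "orders_pairs init (\<lambda>x y. mtfe_x_first (pair_state_of x y h)) sE"
    and s: "distinct s" "set s = set init"
    and init: "a \<in> set init" "x \<in> set init" "y \<in> set init"
  shows "access_pair_cost init a sT x y + access_pair_cost init a sO x y + access_pair_cost init a sE x y
      + pair_potential_term init (h @ [a]) (mv_to k a s) x y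
    \<le> pair_potential_term init h s x y + 5 * access_pair_cost init a s x y"
proof (cases "idx init x < idx init y")
  case lt: True
  then have xy: "x \<noteq> y" by auto
  let ?s' = "mv_to k a s"
  have moved: "(a \<noteq> x \<and> a \<noteq> y \<longrightarrow> (idx ?s' x < idx ?s' y \<longleftrightarrow> idx s x < idx s y)) \<and>
       ((idx ?s' x < idx ?s' y) = (idx s x < idx s y) \<or> (idx ?s' x < idx ?s' y) = (a = x))"
    using mv_to_less_cases[OF s(1), of a x y k] init s(2) xy by simp
  show ?thesis
  proof (cases "a = x \<or> a = y")
    case True
    then have "pair_state_of x y (h @ [a]) = pair_step (pair_state_of x y h) (a = x)"
      using xy by (auto simp: pair_state_of_snoc)
    moreover have "idx sT x < idx sT y \<longleftrightarrow> ts_x_first (fst (pair_state_of x y h))"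
      using ts init lt ts_before_iff_ts_x_first[OF xy lt] by (simp add: orders_pairs_def)
    moreover have "idx sO x < idx sO y \<longleftrightarrow> mtfo_x_first (pair_state_of x y h)"
      "idx sE x < idx sE y \<longleftrightarrow> mtfe_x_first (pair_state_of x y h)"
      using mtfo mtfe init lt by (simp_all add: orders_pairs_def)
    ultimately show ?thesis
      using pair_amortized[OF pair_state_of_in_pair_states, of "idx ?s' x < idx ?s' y"
          "idx s x < idx s y" "a = x" x y h] moved lt True
      by (simp add: access_pair_cost_def pair_potential_term_def)
  next
    case False
    then show ?thesis using moved lt
      by (simp add: access_pair_cost_def pair_potential_term_def pair_state_of_snoc)
  qed
qed (simp add: access_pair_cost_def pair_potential_term_def)

lemma amortized_access:
  assumes "orders_pairs init (ts_before init h) sT"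
    and "orders_pairs init (\<lambda>x y. mtfo_x_first (pair_state_of x y h)) sO"
    and "orders_pairs init (\<lambda>x y. mtfe_x_first (pair_state_of x y h)) sE"
    and s: "distinct s" "set s = set init" and a: "a \<in> set init"
  shows "idx sT a + idx sO a + idx sE a + potential init (h @ [a]) (mv_to k a s)
    \<le> potential init h s + 5 * idx s a"
proof -
  let ?S = "\<lambda>f. \<Sum>x\<in>set init. \<Sum>y\<in>set init. f x y"
  have "idx sT a + idx sO a + idx sE a + potential init (h @ [a]) (mv_to k a s)
      = ?S (\<lambda>x y. access_pair_cost init a sT x y + access_pair_cost init a sO x y
          + access_pair_cost init a sE x y + pair_potential_term init (h @ [a]) (mv_to k a s) x y)"
    using assms(1-3) a idx_eq_sum_access_pair_cost[of _ init a]
    by (simp add: orders_pairs_def potential_def sum.distrib)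
  also have "\<dots> \<le> ?S (\<lambda>x y. pair_potential_term init h s x y + 5 * access_pair_cost init a s x y)"
    by (intro sum_mono amortized_access_pair[OF assms])
  also have "\<dots> = potential init h s + 5 * idx s a"
    using idx_eq_sum_access_pair_cost[OF s a] by (simp add: potential_def sum.distrib sum_distrib_left)
  finally show ?thesis .
qed

lemma online_costs_le:
  assumes "orders_pairs init (ts_before init h) sT"
    and "orders_pairs init (\<lambda>x y. mtfo_x_first (pair_state_of x y h)) sO"
    and "orders_pairs init (\<lambda>x y. mtfe_x_first (pair_state_of x y h)) sE"
    and "distinct s" "set s = set init" "set \<sigma> \<subseteq> set init" "length as = length \<sigma>"
  shows "run_online ts_rule h sT \<sigma> + run_online mtfo_rule h sO \<sigma> + run_online mtfe_rule h sE \<sigma>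
    \<le> 5 * run_offline s \<sigma> as + potential init h s"
  using assms
proof (induction \<sigma> arbitrary: h sT sO sE s as)
  case (Cons a \<sigma>)
  obtain sw k as' where as: "as = (sw, k) # as'" using Cons.prems(7) by (cases as) auto
  define s1 where "s1 = foldl (\<lambda>t i. swap_adj i t) s sw"
  have a: "a \<in> set init" using Cons.prems(6) by simp
  have s1: "distinct s1" "set s1 = set init" using swaps_perm[OF Cons.prems(4)] Cons.prems(5) s1_def by auto
  have "run_online ts_rule (h @ [a]) (mv_to (ts_rule h sT a) a sT) \<sigma>
      + run_online mtfo_rule (h @ [a]) (mv_to (mtfo_rule h sO a) a sO) \<sigma>
      + run_online mtfe_rule (h @ [a]) (mv_to (mtfe_rule h sE a) a sE) \<sigma>
    \<le> 5 * run_offline (mv_to k a s1) \<sigma> as' + potential init (h @ [a]) (mv_to k a s1)"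
    using Cons.IH[OF ts_step[OF Cons.prems(1) a] mtfo_step[OF Cons.prems(2) a]
        mtfe_step[OF Cons.prems(3) a]] mv_to_perm[OF s1(1)] s1(2) a Cons.prems(6,7) as
    by simp
  moreover have "potential init h s1 \<le> potential init h s + 5 * length sw"
    using potential_paid_exchanges[OF Cons.prems(4,5)] s1_def by simp
  moreover note amortized_access[OF Cons.prems(1-3) s1 a, of k]
  ultimately show ?case by (simp add: as s1_def Let_def)
qed simp

theorem theorem3:
  fixes init \<sigma> :: "'a list"
  assumes "distinct init" and "set \<sigma> \<subseteq> set init"
  shows "real (min (TS init \<sigma>) (min (MTFO init \<sigma>) (MTFE init \<sigma>))) \<le> 5 / 3 * real (OPT init \<sigma>)"
proof -
  have "{run_offline init \<sigma> as | as. length as = length \<sigma>} \<noteq> {}"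
    by (auto intro: exI[of _ "replicate (length \<sigma>) ([], 0)"])
  then have "OPT init \<sigma> \<in> {run_offline init \<sigma> as | as. length as = length \<sigma>}"
    unfolding OPT_def by (rule Inf_nat_def1)
  then obtain as where "length as = length \<sigma>" and opt: "OPT init \<sigma> = run_offline init \<sigma> as"
    by blast
  moreover have "orders_pairs init (ts_before init []) init"
    "orders_pairs init (\<lambda>x y. mtfo_x_first (pair_state_of x y [])) init"
    "orders_pairs init (\<lambda>x y. mtfe_x_first (pair_state_of x y [])) init"
    using assms(1) by (simp_all add: orders_pairs_def ts_before_Nil pair_state_of_Nil)
  ultimately have "TS init \<sigma> + MTFO init \<sigma> + MTFE init \<sigma> \<le> 5 * OPT init \<sigma>"
    using online_costs_le[of init "[]" init init init init \<sigma> as] assms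
    by (simp add: TS_def MTFO_def MTFE_def potential_Nil)
  then have "3 * real (min (TS init \<sigma>) (min (MTFO init \<sigma>) (MTFE init \<sigma>))) \<le> 5 * real (OPT init \<sigma>)"
    by linarith
  then show ?thesis by simp
qed

end
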